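(* Let $p\in(0,1/2)$ and $x>2$. Let $(\xi_n)_{n\geq1}$ be i.i.d. with $\mathbf{P}(\xi_1=1)=p=1-\mathbf{P}(\xi_1=-1)$ and let $\mathcal{F}_n:=\sigma(\xi_1,\dots,\xi_n)$. Set $W_0:=x$, $B_1:=1$, $W_n:=W_{n-1}+\xi_nB_n$, $B_{n+1}:=B_n2^{\xi_n}$ for $n\geq1$, and $X_n:=W_n/B_{n+1}-2$ for $n\in\mathbb{N}$ (so $X_0=x-2$). Let $$R:=\max\left\{2,\ \frac{2p}{(1-2p)\log2}+1\right\}.$$ (i) The process defined by $M_0:=0$ and $$M_n:=\sum_{j=1}^n\left(\log X_j-\log X_{j-1}-\left(\tfrac12-p\right)\log2\right)\mathbf{1}_{\{X_{j-1}\geq R\}},\quad n\geq1,$$ is a submartingale with respect to $(\mathcal{F}_n)$ and satisfies $|M_n-M_{n-1}|\leq(5\log2)/2$ for all $n\geq1$. (ii) For $k\geq1$ let $T_k:=\#\{1\leq j\leq k: X_j\geq R\}$. There exist positive constants $C$ and $\beta$, independent of $x$, $p$ and $k$, such that for all $k\geq1$, $$\mathbf{P}\left(T_k>\tfrac{3k}{4},\ X_n\leq0\text{ for some }n\geq k\right)\leq\frac{C}{(1-2p)^2}e^{-\beta(1-2p)^3k}.$$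
   Context: The summand in $M_n$ is interpreted as $0$ when $X_{j-1}<R$; when $X_{j-1}\geq R$ one has $X_j>0$ so the logarithms are defined. *)

theory Defs
  imports "HOL-Probability.Probability"
begin

text \<open>Betting model. The increments are indexed from 1: s 1, s 2, ...; s 0 is unused.
  bet s n = B_(n+1), with B_1 = 1 and B_(n+1) = B_n * 2 powr xi_n.\<close>
fun bet :: "(nat \<Rightarrow> real) \<Rightarrow> nat \<Rightarrow> real" where
  "bet s 0 = 1"
| "bet s (Suc n) = bet s n * 2 powr (s (Suc n))"

fun wealth :: "(nat \<Rightarrow> real) \<Rightarrow> real \<Rightarrow> nat \<Rightarrow> real" where
  "wealth s x 0 = x"
| "wealth s x (Suc n) = wealth s x n + s (Suc n) * bet s n"

definition Xproc :: "(nat \<Rightarrow> real) \<Rightarrow> real \<Rightarrow> nat \<Rightarrow> real" where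
  "Xproc s x n = wealth s x n / bet s n - 2"

definition Rconst :: "real \<Rightarrow> real" where
  "Rconst p = max 2 (2 * p / ((1 - 2 * p) * ln 2) + 1)"

definition Mproc :: "real \<Rightarrow> (nat \<Rightarrow> real) \<Rightarrow> real \<Rightarrow> nat \<Rightarrow> real" where
  "Mproc p s x n = (\<Sum>j\<in>{1..n}.
     (if Xproc s x (j - 1) \<ge> Rconst p
      then ln (Xproc s x j) - ln (Xproc s x (j - 1)) - (1/2 - p) * ln 2 else 0))"

definition Tcount :: "real \<Rightarrow> (nat \<Rightarrow> real) \<Rightarrow> real \<Rightarrow> nat \<Rightarrow> nat" where
  "Tcount p s x k = card {j\<in>{1..k}. Xproc s x j \<ge> Rconst p}"

definition nat_filt :: "'a measure \<Rightarrow> (nat \<Rightarrow> 'a \<Rightarrow> real) \<Rightarrow> nat \<Rightarrow> 'a measure" where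
  "nat_filt M \<xi> n = sigma (space M)
     {\<xi> j -` A \<inter> space M | j A. j \<in> {1..n} \<and> A \<in> sets borel}"

definition submartingale :: "'a measure \<Rightarrow> (nat \<Rightarrow> 'a measure) \<Rightarrow> (nat \<Rightarrow> 'a \<Rightarrow> real) \<Rightarrow> bool" where
  "submartingale M F Y \<longleftrightarrow>
     (\<forall>n. subalgebra M (F n)) \<and> (\<forall>n. sets (F n) \<subseteq> sets (F (Suc n))) \<and>
     (\<forall>n. integrable M (Y n)) \<and> (\<forall>n. Y n \<in> borel_measurable (F n)) \<and>
     (\<forall>n. AE \<omega> in M. Y n \<omega> \<le> real_cond_exp M (F n) (Y (Suc n)) \<omega>)"

definition bet_setup :: "'a measure \<Rightarrow> real \<Rightarrow> real \<Rightarrow> (nat \<Rightarrow> 'a \<Rightarrow> real) \<Rightarrow> bool" where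
  "bet_setup M p x \<xi> \<longleftrightarrow>
     prob_space M \<and> 0 < p \<and> p < 1/2 \<and> x > 2 \<and>
     (\<forall>n\<ge>1. \<xi> n \<in> borel_measurable M) \<and>
     prob_space.indep_vars M (\<lambda>_. borel) \<xi> {1..} \<and>
     (\<forall>n\<ge>1. measure M {\<omega>\<in>space M. \<xi> n \<omega> = 1} = p \<and>
             measure M {\<omega>\<in>space M. \<xi> n \<omega> = -1} = 1 - p)"

end

theory Submission
  imports Defs
begin

text \<open>
  A win maps the rescaled wealth \<open>X\<close> to \<open>(X - 1)/2\<close> and a loss maps it to \<open>2X\<close>. Since the
  next coin is independent of \<open>F\<^sub>n\<close>, on \<open>X\<^sub>n \<ge> R\<close> the conditional expectation of the
  increment of \<open>M\<close> is \<open>(1/2 - p) ln 2 - p ln (X\<^sub>n / (X\<^sub>n - 1))\<close>, which is nonnegative by the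
  choice of \<open>R\<close>.

  While \<open>X \<ge> R\<close>, a step raises \<open>ln X\<close> by at least \<open>ln 2\<close> (loss) or \<open>-ln (2R/(R - 1))\<close> (win).
  Let \<open>\<sigma>\<close> be the last time before ruin with \<open>X\<^sub>\<sigma> \<ge> R\<close>. Then \<open>X\<^sub>\<sigma>\<^sub>+\<^sub>1 < R\<close> forces a win,
  so \<open>X\<^sub>\<sigma> < 2R + 1\<close>: the guaranteed log-growth \<open>G\<^sub>\<sigma>\<close> of the steps started above \<open>R\<close> up to
  \<open>\<sigma>\<close> is at most \<open>ln (5/2) \<le> 1\<close>, while there are \<open>N\<^sub>\<sigma> \<ge> T\<^sub>k - 1\<close> such steps. Hence
  \<open>\<lambda> N\<^sub>\<sigma> - \<theta> G\<^sub>\<sigma> \<ge> \<lambda> (3k/4 - 1) - \<theta>\<close>. For \<open>q = 1 - 2p\<close>, \<open>\<theta> = q/20\<close> and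
  \<open>\<lambda> = -ln (1 - q\<^sup>2/200)\<close> the exponential of \<open>\<lambda> N\<^sub>n - \<theta> G\<^sub>n\<close> is a supermartingale, and
  Ville's inequality bounds the probability of this event by
  \<open>exp (\<theta> - \<lambda> (3k/4 - 1)) \<le> e\<^sup>2 q\<^sup>-\<^sup>2 exp (-3 q\<^sup>3 k / 800)\<close>.
\<close>

section \<open>The filtration generated by the coins\<close>

lemma space_nat_filt [simp]: "space (nat_filt M \<xi> n) = space M"
  unfolding nat_filt_def by (rule space_measure_of) blast

lemma sets_nat_filt:
  "sets (nat_filt M \<xi> n) =
     sigma_sets (space M) {\<xi> j -` A \<inter> space M | j A. j \<in> {1..n} \<and> A \<in> sets borel}"
  unfolding nat_filt_def by (rule sets_measure_of) blast

lemma sets_nat_filt_mono: "m \<le> n \<Longrightarrow> sets (nat_filt M \<xi> m) \<subseteq> sets (nat_filt M \<xi> n)"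
  unfolding sets_nat_filt by (rule sigma_sets_mono') fastforce

lemma subalgebra_nat_filt:
  assumes "\<And>j. 1 \<le> j \<Longrightarrow> \<xi> j \<in> borel_measurable M"
  shows "subalgebra M (nat_filt M \<xi> n)"
  unfolding subalgebra_def sets_nat_filt
  by (fastforce intro!: sets.sigma_sets_subset measurable_sets assms)

lemma measurable_nat_filt_mono:
  "f \<in> borel_measurable (nat_filt M \<xi> m) \<Longrightarrow> m \<le> n \<Longrightarrow> f \<in> borel_measurable (nat_filt M \<xi> n)"
  by (erule measurable_from_subalg[rotated]) (simp add: subalgebra_def sets_nat_filt_mono)

lemma xi_measurable_nat_filt:
  assumes "1 \<le> j" "j \<le> n"
  shows "\<xi> j \<in> borel_measurable (nat_filt M \<xi> n)"
proof (rule measurableI)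
  fix A :: "real set" assume "A \<in> sets borel"
  show "\<xi> j -` A \<inter> space (nat_filt M \<xi> n) \<in> sets (nat_filt M \<xi> n)"
  proof -
    have "\<xi> j -` A \<inter> space M \<in> {\<xi> j -` A \<inter> space M | j A. j \<in> {1..n} \<and> A \<in> sets borel}"
      using assms \<open>A \<in> sets borel\<close> by auto
    then show ?thesis unfolding sets_nat_filt space_nat_filt by (rule sigma_sets.Basic)
  qed
qed simp

lemma bet_measurable_nat_filt:
  "m \<le> n \<Longrightarrow> (\<lambda>\<omega>. bet (\<lambda>i. \<xi> i \<omega>) m) \<in> borel_measurable (nat_filt M \<xi> n)"
proof (induction m)
  case (Suc m)
  then have [measurable]: "\<xi> (Suc m) \<in> borel_measurable (nat_filt M \<xi> n)"
    and [measurable]: "(\<lambda>\<omega>. bet (\<lambda>i. \<xi> i \<omega>) m) \<in> borel_measurable (nat_filt M \<xi> n)"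
    by (simp_all add: xi_measurable_nat_filt)
  show ?case by simp
qed simp

lemma wealth_measurable_nat_filt:
  "m \<le> n \<Longrightarrow> (\<lambda>\<omega>. wealth (\<lambda>i. \<xi> i \<omega>) x m) \<in> borel_measurable (nat_filt M \<xi> n)"
proof (induction m)
  case (Suc m)
  then have [measurable]: "\<xi> (Suc m) \<in> borel_measurable (nat_filt M \<xi> n)"
    and [measurable]: "(\<lambda>\<omega>. wealth (\<lambda>i. \<xi> i \<omega>) x m) \<in> borel_measurable (nat_filt M \<xi> n)"
    and [measurable]: "(\<lambda>\<omega>. bet (\<lambda>i. \<xi> i \<omega>) m) \<in> borel_measurable (nat_filt M \<xi> n)"
    by (simp_all add: xi_measurable_nat_filt bet_measurable_nat_filt)
  show ?case by simp
qed simp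

lemma Xproc_measurable_nat_filt:
  assumes "m \<le> n"
  shows "(\<lambda>\<omega>. Xproc (\<lambda>i. \<xi> i \<omega>) x m) \<in> borel_measurable (nat_filt M \<xi> n)"
proof -
  have [measurable]: "(\<lambda>\<omega>. wealth (\<lambda>i. \<xi> i \<omega>) x m) \<in> borel_measurable (nat_filt M \<xi> n)"
    "(\<lambda>\<omega>. bet (\<lambda>i. \<xi> i \<omega>) m) \<in> borel_measurable (nat_filt M \<xi> n)"
    using assms by (rule wealth_measurable_nat_filt, rule bet_measurable_nat_filt)
  show ?thesis unfolding Xproc_def by measurable
qed

lemma Mproc_measurable_nat_filt:
  "(\<lambda>\<omega>. Mproc p (\<lambda>i. \<xi> i \<omega>) x n) \<in> borel_measurable (nat_filt M \<xi> n)"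
  unfolding Mproc_def
proof (rule borel_measurable_sum)
  fix j assume "j \<in> {1..n}"
  then have [measurable]: "(\<lambda>\<omega>. Xproc (\<lambda>i. \<xi> i \<omega>) x j) \<in> borel_measurable (nat_filt M \<xi> n)"
    "(\<lambda>\<omega>. Xproc (\<lambda>i. \<xi> i \<omega>) x (j - 1)) \<in> borel_measurable (nat_filt M \<xi> n)"
    by (auto intro: Xproc_measurable_nat_filt)
  show "(\<lambda>\<omega>. if Rconst p \<le> Xproc (\<lambda>i. \<xi> i \<omega>) x (j - 1)
          then ln (Xproc (\<lambda>i. \<xi> i \<omega>) x j) - ln (Xproc (\<lambda>i. \<xi> i \<omega>) x (j - 1)) - (1/2 - p) * ln 2
          else 0) \<in> borel_measurable (nat_filt M \<xi> n)"
    by measurable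
qed

section \<open>Pathwise estimates\<close>

lemma ln_div_diff_one_le: "1 < (X::real) \<Longrightarrow> ln (X / (X - 1)) \<le> 1 / (X - 1)"
  using ln_le_minus_one[of "X / (X - 1)"] by (simp add: field_simps)

lemma ln_5_div_2_le_1: "ln (5/2 :: real) \<le> 1"
proof -
  have "5/2 \<le> exp (1::real)"
    using exp_lower_Taylor_quadratic[of 1] by simp
  then show ?thesis
    by (metis exp_gt_zero ln_exp ln_le_cancel_iff zero_less_divide_iff zero_less_numeral)
qed

lemma exp_neg_le_quadratic:
  fixes u :: real
  assumes "0 \<le> u"
  shows "exp (- u) \<le> 1 - u + u\<^sup>2"
proof -
  have "1 - u + u\<^sup>2 = (u - 1/2)\<^sup>2 + 3/4"
    by (simp add: power2_eq_square algebra_simps)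
  then have nonneg: "0 \<le> 1 - u + u\<^sup>2"
    by (metis add_nonneg_nonneg zero_le_power2 zero_le_divide_iff zero_le_numeral)
  have "1 \<le> (1 - u + u\<^sup>2) * (1 + u)"
    using assms by (simp add: algebra_simps power2_eq_square)
  also have "\<dots> \<le> (1 - u + u\<^sup>2) * exp u"
    using nonneg by (intro mult_left_mono exp_ge_add_one_self)
  finally show ?thesis by (simp add: exp_minus field_simps)
qed

lemma bet_pos: "0 < bet s n"
  by (induction n) auto

lemma Xproc_Suc_pm:
  assumes "s (Suc n) \<in> {-1, 1}"
  shows "Xproc s x (Suc n) = (if s (Suc n) = 1 then (Xproc s x n - 1) / 2 else 2 * Xproc s x n)"
  using assms bet_pos[of s n]
  by (auto simp: Xproc_def powr_minus_divide field_simps)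

lemma Xproc_nonpos_absorbing:
  assumes s: "\<And>j. s (Suc j) \<in> {-1, 1}" and "Xproc s x n \<le> 0" "n \<le> m"
  shows "Xproc s x m \<le> 0"
  using assms(3)
proof (induction m rule: dec_induct)
  case (step m)
  then show ?case using Xproc_Suc_pm[of s m x] s[of m] by auto
qed (use assms(2) in simp)

lemma Rconst_ge_2: "2 \<le> Rconst p"
  unfolding Rconst_def by simp

text \<open>This is the property that dictates the choice of \<open>Rconst\<close>.\<close>
lemma Rconst_drift:
  assumes p: "0 < p" "p < 1/2" and X: "Rconst p \<le> X"
  shows "p * ln (X / (X - 1)) \<le> (1/2 - p) * ln 2"
proof -
  have X2: "2 \<le> X" using X Rconst_ge_2[of p] by linarith
  have "2 * p / ((1 - 2 * p) * ln 2) \<le> X - 1"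
    using X unfolding Rconst_def by linarith
  then have "p / (X - 1) \<le> (1/2 - p) * ln 2"
    using p X2 by (simp add: field_simps)
  moreover have "p * ln (X / (X - 1)) \<le> p / (X - 1)"
    using mult_left_mono[OF ln_div_diff_one_le[of X], of p] p X2 by simp
  ultimately show ?thesis by linarith
qed

definition Mproc_incr :: "real \<Rightarrow> real \<Rightarrow> real \<Rightarrow> real" where
  "Mproc_incr p X X' = (if Rconst p \<le> X then ln X' - ln X - (1/2 - p) * ln 2 else 0)"

lemma Mproc_Suc:
  "Mproc p s x (Suc n) = Mproc p s x n + Mproc_incr p (Xproc s x n) (Xproc s x (Suc n))"
proof -
  have "{1..Suc n} = insert (Suc n) {1..n}" by auto
  then show ?thesis unfolding Mproc_def Mproc_incr_def by simp
qed

lemma Mproc_Suc_pm: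
  assumes "s (Suc n) \<in> {-1, 1}"
  shows "Mproc p s x (Suc n) = Mproc p s x n +
    (if s (Suc n) = 1 then Mproc_incr p (Xproc s x n) ((Xproc s x n - 1) / 2)
     else Mproc_incr p (Xproc s x n) (2 * Xproc s x n))"
  unfolding Mproc_Suc Xproc_Suc_pm[of s n x, OF assms] by simp

lemma
  assumes p: "0 < p" "p < 1/2"
  shows abs_Mproc_incr_win_le: "\<bar>Mproc_incr p X ((X - 1) / 2)\<bar> \<le> 5 * ln 2 / 2"
    and abs_Mproc_incr_loss_le: "\<bar>Mproc_incr p X (2 * X)\<bar> \<le> 5 * ln 2 / 2"
proof -
  have c: "0 \<le> (1/2 - p) * ln 2" "(1/2 - p) * ln 2 \<le> ln 2 / 2" using p by auto
  have "\<bar>Mproc_incr p X ((X - 1) / 2)\<bar> \<le> 5 * ln 2 / 2 \<and> \<bar>Mproc_incr p X (2 * X)\<bar> \<le> 5 * ln 2 / 2"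
  proof (cases "Rconst p \<le> X")
    case True
    then have X: "2 \<le> X" using Rconst_ge_2[of p] by linarith
    have "ln (X / 4) \<le> ln ((X - 1) / 2)" "ln ((X - 1) / 2) \<le> ln X"
      using X by (auto intro: ln_mono)
    moreover have "ln (X / 4) = ln X - 2 * ln 2" "ln (2 * X) = ln 2 + ln X"
      using X ln_realpow[of 2 2] by (simp_all add: ln_div ln_mult)
    moreover have "Mproc_incr p X ((X - 1) / 2) = ln ((X - 1) / 2) - ln X - (1/2 - p) * ln 2"
      "Mproc_incr p X (2 * X) = ln (2 * X) - ln X - (1/2 - p) * ln 2"
      using True by (simp_all add: Mproc_incr_def)
    ultimately show ?thesis
      using c unfolding abs_le_iff by (intro conjI) linarith+
  qed (simp add: Mproc_incr_def)
  then show "\<bar>Mproc_incr p X ((X - 1) / 2)\<bar> \<le> 5 * ln 2 / 2"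
    and "\<bar>Mproc_incr p X (2 * X)\<bar> \<le> 5 * ln 2 / 2"
    by auto
qed

lemma Mproc_increment_bound:
  assumes "0 < p" "p < 1/2" "s (Suc n) \<in> {-1, 1}"
  shows "\<bar>Mproc p s x (Suc n) - Mproc p s x n\<bar> \<le> 5 * ln 2 / 2"
  using abs_Mproc_incr_win_le[OF assms(1,2)] abs_Mproc_incr_loss_le[OF assms(1,2)]
  by (simp add: Mproc_Suc_pm[of s n p x, OF assms(3)])

lemma abs_Mproc_le:
  assumes "0 < p" "p < 1/2" "\<forall>j. s (Suc j) \<in> {-1, 1}"
  shows "\<bar>Mproc p s x n\<bar> \<le> real n * (5 * ln 2 / 2)"
proof (induction n)
  case (Suc n)
  then show ?case
    using Mproc_increment_bound[OF assms(1,2), of s n x] assms(3)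
      abs_triangle_ineq2[of "Mproc p s x (Suc n)" "Mproc p s x n"]
    by (simp add: distrib_right)
qed (simp add: Mproc_def)

lemma Mproc_incr_drift_nonneg:
  assumes p: "0 < p" "p < 1/2"
  shows "0 \<le> p * Mproc_incr p X ((X - 1) / 2) + (1 - p) * Mproc_incr p X (2 * X)"
proof (cases "Rconst p \<le> X")
  case True
  then have X: "2 \<le> X" using Rconst_ge_2[of p] by linarith
  have incr: "Mproc_incr p X ((X - 1) / 2) = - ln (X / (X - 1)) - ln 2 - (1/2 - p) * ln 2"
    "Mproc_incr p X (2 * X) = ln 2 - (1/2 - p) * ln 2"
    using True X by (simp_all add: Mproc_incr_def ln_div ln_mult)
  have "p * Mproc_incr p X ((X - 1) / 2) + (1 - p) * Mproc_incr p X (2 * X)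
      = (1/2 - p) * ln 2 - p * ln (X / (X - 1))"
    unfolding incr by (simp add: field_simps)
  then show ?thesis using Rconst_drift[OF p True] by simp
qed (simp add: Mproc_incr_def)

definition log_growth_lb :: "real \<Rightarrow> (nat \<Rightarrow> real) \<Rightarrow> real \<Rightarrow> nat \<Rightarrow> real" where
  "log_growth_lb R s x n = (\<Sum>j<n. if R \<le> Xproc s x j
     then (if s (Suc j) = 1 then - ln (2 * R / (R - 1)) else ln 2) else 0)"

definition high_visits :: "real \<Rightarrow> (nat \<Rightarrow> real) \<Rightarrow> real \<Rightarrow> nat \<Rightarrow> nat" where
  "high_visits R s x n = card {j. j < n \<and> R \<le> Xproc s x j}"

lemma ln_max_Xproc_Suc_ge:
  assumes R: "2 \<le> R" and X: "R \<le> Xproc s x n" and s: "s (Suc n) \<in> {-1, 1}"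
  shows "ln (Xproc s x n) + (if s (Suc n) = 1 then - ln (2 * R / (R - 1)) else ln 2)
           \<le> ln (max (Xproc s x (Suc n)) R)"
proof (cases "s (Suc n) = 1")
  case True
  have "Xproc s x (Suc n) = (Xproc s x n - 1) / 2"
    using True Xproc_Suc_pm[of s n x] s by simp
  moreover have "Xproc s x n * ((R - 1) / (2 * R)) \<le> (Xproc s x n - 1) / 2"
    using R X by (simp add: field_simps)
  ultimately have "Xproc s x n * ((R - 1) / (2 * R)) \<le> Xproc s x (Suc n)" by linarith
  then have "ln (Xproc s x n * ((R - 1) / (2 * R))) \<le> ln (max (Xproc s x (Suc n)) R)"
    using R X by (intro ln_mono) auto
  moreover have "ln (Xproc s x n * ((R - 1) / (2 * R))) = ln (Xproc s x n) - ln (2 * R / (R - 1))"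
    using R X by (simp add: ln_mult ln_div)
  ultimately show ?thesis using True by simp
next
  case False
  then have "max (Xproc s x (Suc n)) R = 2 * Xproc s x n"
    using R X Xproc_Suc_pm[of s n x] s by auto
  then show ?thesis using False R X by (simp add: ln_mult)
qed

lemma ln_max_Xproc_ge:
  assumes R: "2 \<le> R" and s: "\<And>j. s (Suc j) \<in> {-1, 1}"
  shows "ln R + log_growth_lb R s x n \<le> ln (max (Xproc s x n) R)"
proof (induction n)
  case 0
  show ?case using R by (simp add: log_growth_lb_def)
next
  case (Suc n)
  have step: "log_growth_lb R s x (Suc n) = log_growth_lb R s x n + (if R \<le> Xproc s x n
      then (if s (Suc n) = 1 then - ln (2 * R / (R - 1)) else ln 2) else 0)"
    unfolding log_growth_lb_def by simp
  show ?case
  proof (cases "R \<le> Xproc s x n")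
    case True
    then have "ln R + log_growth_lb R s x n \<le> ln (Xproc s x n)"
      using Suc.IH by (simp add: max_def)
    then show ?thesis
      using ln_max_Xproc_Suc_ge[of R s x n, OF R True s] True by (simp only: step if_True)
  next
    case False
    have "ln R \<le> ln (max (Xproc s x (Suc n)) R)" using R by simp
    then show ?thesis using Suc.IH False by (simp add: step max_def)
  qed
qed

lemma high_times_before_ruin:
  assumes R: "0 < R" and s: "\<And>j. s (Suc j) \<in> {-1, 1}" and ruin: "Xproc s x n \<le> 0"
  shows "{j. R \<le> Xproc s x j} \<subseteq> {..<n}"
proof
  fix j assume "j \<in> {j. R \<le> Xproc s x j}"
  then show "j \<in> {..<n}"
    using Xproc_nonpos_absorbing[of s x n j] s ruin R by (cases "n \<le> j") auto
qed

lemma log_growth_lb_le_1_at_exit: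
  assumes R: "2 \<le> R" and s: "\<And>j. s (Suc j) \<in> {-1, 1}"
    and high: "R \<le> Xproc s x \<sigma>" and exit: "Xproc s x (Suc \<sigma>) < R"
  shows "log_growth_lb R s x \<sigma> \<le> 1"
proof -
  have "s (Suc \<sigma>) = 1"
    using Xproc_Suc_pm[of s \<sigma> x] s[of \<sigma>] exit high R by (cases "s (Suc \<sigma>) = 1") auto
  then have "Xproc s x \<sigma> < 2 * R + 1"
    using exit Xproc_Suc_pm[of s \<sigma> x] by simp
  then have "ln (Xproc s x \<sigma>) \<le> ln (2 * R + 1)"
    using high R by (intro ln_mono) auto
  moreover have "ln R + log_growth_lb R s x \<sigma> \<le> ln (Xproc s x \<sigma>)"
    using ln_max_Xproc_ge[of R s x \<sigma>] R s high by (simp add: max_def)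
  moreover have "ln (2 * R + 1) - ln R = ln ((2 * R + 1) / R)"
    using R by (simp add: ln_div)
  moreover have "ln ((2 * R + 1) / R) \<le> ln (5/2)"
    using R by (intro ln_mono) (auto simp: field_simps)
  ultimately show ?thesis using ln_5_div_2_le_1 by linarith
qed

lemma exists_last_high_time:
  assumes R: "2 \<le> R" and s: "\<And>j. s (Suc j) \<in> {-1, 1}" and ruin: "Xproc s x n \<le> 0"
  shows "\<exists>\<sigma>. card {j. R \<le> Xproc s x j} \<le> Suc (high_visits R s x \<sigma>) \<and> log_growth_lb R s x \<sigma> \<le> 1"
proof (cases "{j. R \<le> Xproc s x j} = {}")
  case True
  then show ?thesis by (intro exI[of _ 0]) (simp add: log_growth_lb_def)
next
  case False
  define H where "H = {j. R \<le> Xproc s x j}"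
  have fin: "finite H"
    unfolding H_def using high_times_before_ruin[of R s x n] R s ruin
    by (auto intro: finite_subset)
  define \<sigma> where "\<sigma> = Max H"
  have X\<sigma>: "R \<le> Xproc s x \<sigma>" and last: "\<And>j. R \<le> Xproc s x j \<Longrightarrow> j \<le> \<sigma>"
    using Max_in[OF fin] Max_ge[OF fin] False unfolding \<sigma>_def H_def by auto
  have "H \<subseteq> insert \<sigma> {j. j < \<sigma> \<and> R \<le> Xproc s x j}"
    unfolding H_def using last le_neq_implies_less by blast
  then have "card H \<le> card (insert \<sigma> {j. j < \<sigma> \<and> R \<le> Xproc s x j})"
    by (intro card_mono) auto
  also have "\<dots> \<le> Suc (high_visits R s x \<sigma>)"
    unfolding high_visits_def by (simp add: card_insert_if)
  finally have "card H \<le> Suc (high_visits R s x \<sigma>)" .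
  moreover have "log_growth_lb R s x \<sigma> \<le> 1"
    using last[of "Suc \<sigma>"] by (intro log_growth_lb_le_1_at_exit[OF R s X\<sigma>]) force
  ultimately show ?thesis unfolding H_def by blast
qed

lemma sum_high_visit_weights:
  "(\<Sum>j<n. if R \<le> Xproc s x j
      then (if s (Suc j) = 1 then lm + \<theta> * ln (2 * R / (R - 1)) else lm - \<theta> * ln 2) else 0)
   = lm * real (high_visits R s x n) - \<theta> * log_growth_lb R s x n"
proof -
  have "real (high_visits R s x n) = (\<Sum>j<n. if R \<le> Xproc s x j then 1 else 0)"
    unfolding high_visits_def by (simp add: sum.If_cases lessThan_def Collect_conj_eq Int_commute)
  then have "lm * real (high_visits R s x n) - \<theta> * log_growth_lb R s x n
      = (\<Sum>j<n. lm * (if R \<le> Xproc s x j then 1 else 0) - \<theta> * (if R \<le> Xproc s x j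
          then (if s (Suc j) = 1 then - ln (2 * R / (R - 1)) else ln 2) else 0))"
    unfolding log_growth_lb_def by (simp only: sum_distrib_left sum_subtractf)
  also have "\<dots> = (\<Sum>j<n. if R \<le> Xproc s x j
      then (if s (Suc j) = 1 then lm + \<theta> * ln (2 * R / (R - 1)) else lm - \<theta> * ln 2) else 0)"
    by (intro sum.cong) auto
  finally show ?thesis ..
qed

lemma high_visits_before_ruin_weight_ge:
  assumes R: "2 \<le> R" and s: "\<And>j. s (Suc j) \<in> {-1, 1}" and ruin: "Xproc s x n \<le> 0"
    and T: "3 * real k / 4 < real (card {j \<in> {1..k}. R \<le> Xproc s x j})"
    and lm: "0 \<le> lm" and \<theta>: "0 \<le> \<theta>"
  shows "\<exists>\<sigma>. lm * (3 * real k / 4 - 1) - \<theta> \<le> (\<Sum>j<\<sigma>. if R \<le> Xproc s x j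
           then (if s (Suc j) = 1 then lm + \<theta> * ln (2 * R / (R - 1)) else lm - \<theta> * ln 2) else 0)"
proof -
  obtain \<sigma> where \<sigma>: "card {j. R \<le> Xproc s x j} \<le> Suc (high_visits R s x \<sigma>)"
    "log_growth_lb R s x \<sigma> \<le> 1"
    using exists_last_high_time[OF R s ruin] by blast
  have "finite {j. R \<le> Xproc s x j}"
    by (rule finite_subset[OF high_times_before_ruin[OF _ s ruin]]) (use R in auto)
  then have "card {j \<in> {1..k}. R \<le> Xproc s x j} \<le> Suc (high_visits R s x \<sigma>)"
    by (intro le_trans[OF card_mono \<sigma>(1)]) auto
  then have "3 * real k / 4 - 1 \<le> real (high_visits R s x \<sigma>)"
    using T by linarith
  then have "lm * (3 * real k / 4 - 1) \<le> lm * real (high_visits R s x \<sigma>)"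
    using lm by (rule mult_left_mono)
  moreover have "\<theta> * log_growth_lb R s x \<sigma> \<le> \<theta>"
    using \<sigma>(2) \<theta> by (simp add: mult_left_le)
  ultimately show ?thesis
    unfolding sum_high_visit_weights by (intro exI[of _ \<sigma>]) linarith
qed

fun stopped_sum :: "real \<Rightarrow> (nat \<Rightarrow> real) \<Rightarrow> nat \<Rightarrow> real" where
  "stopped_sum L d 0 = 0"
| "stopped_sum L d (Suc n) =
     (if L \<le> stopped_sum L d n then stopped_sum L d n else stopped_sum L d n + d n)"

lemma stopped_sum_eq_sum: "stopped_sum L d n < L \<Longrightarrow> stopped_sum L d n = (\<Sum>j<n. d j)"
proof (induction n)
  case (Suc n)
  have below: "\<not> L \<le> stopped_sum L d n"
    using Suc.prems by (auto split: if_splits)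
  then have "stopped_sum L d n = (\<Sum>j<n. d j)"
    by (intro Suc.IH) simp
  with below show ?case by simp
qed simp

lemma le_stopped_sum: "L \<le> (\<Sum>j<n. d j) \<Longrightarrow> L \<le> stopped_sum L d n"
  using stopped_sum_eq_sum[of L d n] by (cases "stopped_sum L d n < L") auto

lemma abs_stopped_sum_le: "\<bar>stopped_sum L d n\<bar> \<le> (\<Sum>j<n. \<bar>d j\<bar>)"
proof (induction n)
  case (Suc n)
  have "\<bar>stopped_sum L d n + d n\<bar> \<le> \<bar>stopped_sum L d n\<bar> + \<bar>d n\<bar>"
    by (rule abs_triangle_ineq)
  then show ?case using Suc by (simp add: add_increasing2)
qed simp

lemma exp_moment_bound:
  assumes p: "0 < p" "p < 1/2"
  defines "q \<equiv> 1 - 2 * p" and "R \<equiv> Rconst p"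
  shows "p * exp (q / 20 * ln (2 * R / (R - 1))) + (1 - p) * exp (- (q / 20 * ln 2))
           \<le> 1 - q\<^sup>2 / 200"
proof -
  define t l b where "t = q / 20" and "l = ln (2::real)" and "b = ln (2 * R / (R - 1))"
  have q: "0 < q" "q \<le> 1" using p unfolding q_def by auto
  have R2: "2 \<le> R" unfolding R_def by (rule Rconst_ge_2)
  have l: "2/3 \<le> l" "l < 1" unfolding l_def by (rule ln2_ge_two_thirds, rule ln_2_less_1)
  have b: "b = l + ln (R / (R - 1))"
    unfolding b_def l_def using R2 ln_mult[of 2 "R / (R - 1)"] by (simp add: times_divide_eq_right)
  have "ln (R / (R - 1)) \<le> 1 / (R - 1)" "1 / (R - 1) \<le> 1" "0 \<le> ln (R / (R - 1))"
    using R2 ln_div_diff_one_le[of R] by auto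
  then have b02: "0 \<le> b" "b \<le> 2" using b l by auto
  have pb: "p * b \<le> l / 2"
    using Rconst_drift[OF p order_refl] unfolding b R_def l_def by (simp add: algebra_simps)
  have t: "0 \<le> t" "t \<le> 1/20" using q unfolding t_def by auto
  have "exp (t * b) \<le> 1 + t * b + (t * b)\<^sup>2"
    using t b02 by (intro exp_bound) (auto intro: order_trans[OF mult_mono[of t "1/20" b 2]])
  moreover have "exp (- (t * l)) \<le> 1 - t * l + (t * l)\<^sup>2"
    using t l by (intro exp_neg_le_quadratic) simp
  ultimately have "p * exp (t * b) + (1 - p) * exp (- (t * l))
      \<le> p * (1 + t * b + (t * b)\<^sup>2) + (1 - p) * (1 - t * l + (t * l)\<^sup>2)"
    using p by (intro add_mono mult_left_mono) auto
  also have "\<dots> = 1 + t * (p * b - (1 - p) * l) + t\<^sup>2 * (p * b\<^sup>2 + (1 - p) * l\<^sup>2)"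
    by (simp add: algebra_simps power2_eq_square)
  also have "\<dots> \<le> 1 + t * (- (q * l / 2)) + t\<^sup>2 * 4"
  proof -
    have "p * b - (1 - p) * l \<le> - (q * l / 2)"
      using pb unfolding q_def by (simp add: field_simps)
    moreover have "p * b\<^sup>2 + (1 - p) * l\<^sup>2 \<le> p * 2\<^sup>2 + (1 - p) * 1\<^sup>2"
      using p b02 l by (intro add_mono mult_left_mono power_mono) auto
    ultimately show ?thesis
      using t p by (intro add_mono mult_left_mono) auto
  qed
  also have "\<dots> \<le> 1 - q\<^sup>2 / 200"
    using l q unfolding t_def by (simp add: algebra_simps power2_eq_square)
  finally show ?thesis unfolding t_def l_def b_def .
qed

lemma exp_moment_le_1:
  assumes p: "0 < p" "p < 1/2"
  defines "q \<equiv> 1 - 2 * p" and "R \<equiv> Rconst p" and "lm \<equiv> - ln (1 - (1 - 2 * p)\<^sup>2 / 200)"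
  shows "p * exp (lm + q / 20 * ln (2 * R / (R - 1))) + (1 - p) * exp (lm - q / 20 * ln 2) \<le> 1"
proof -
  have q2: "0 < q\<^sup>2" "q\<^sup>2 \<le> 1" using p unfolding q_def by (auto simp: power_le_one)
  have "p * exp (lm + q / 20 * ln (2 * R / (R - 1))) + (1 - p) * exp (lm - q / 20 * ln 2)
      = exp lm * (p * exp (q / 20 * ln (2 * R / (R - 1))) + (1 - p) * exp (- (q / 20 * ln 2)))"
    unfolding diff_conv_add_uminus[of lm] exp_add by (simp add: algebra_simps)
  also have "\<dots> \<le> exp lm * (1 - q\<^sup>2 / 200)"
    using exp_moment_bound[OF p] unfolding q_def R_def by simp
  also have "\<dots> = 1"
    using q2 unfolding lm_def q_def by (simp add: exp_minus)
  finally show ?thesis .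
qed

lemma neg_ln_rate_bounds:
  fixes q :: real
  assumes "0 < q" "q \<le> 1"
  shows "q\<^sup>2 / 200 \<le> - ln (1 - q\<^sup>2 / 200)" and "- ln (1 - q\<^sup>2 / 200) \<le> 1"
proof -
  have q2: "0 < q\<^sup>2" "q\<^sup>2 \<le> 1" using assms by (auto simp: power_le_one)
  show "q\<^sup>2 / 200 \<le> - ln (1 - q\<^sup>2 / 200)"
    using ln_le_minus_one[of "1 - q\<^sup>2 / 200"] q2 by simp
  have "ln (1/2) \<le> ln (1 - q\<^sup>2 / 200)" using q2 by (intro ln_mono) auto
  then show "- ln (1 - q\<^sup>2 / 200) \<le> 1" using ln_2_less_1 by (simp add: ln_div)
qed

lemma exp_neg_threshold_le:
  fixes q \<theta> lm :: real and k :: nat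
  assumes q: "0 < q" "q \<le> 1" and \<theta>: "\<theta> \<le> 1" and lm: "q\<^sup>2 / 200 \<le> lm" "lm \<le> 1"
  shows "exp (- (lm * (3 * real k / 4 - 1) - \<theta>)) \<le> exp 2 / q\<^sup>2 * exp (- (3/800) * q ^ 3 * real k)"
proof -
  have "q ^ 3 \<le> q\<^sup>2" using q by (simp add: power_decreasing)
  then have "(3/800) * q ^ 3 * real k \<le> (3/800) * q\<^sup>2 * real k"
    by (intro mult_right_mono) auto
  also have "\<dots> = q\<^sup>2 / 200 * (3 * real k / 4)" by simp
  also have "\<dots> \<le> lm * (3 * real k / 4)"
    using lm by (intro mult_right_mono) auto
  finally have "(3/800) * q ^ 3 * real k \<le> lm * (3 * real k / 4)" .
  then have "exp (- (lm * (3 * real k / 4 - 1) - \<theta>)) \<le> exp 2 * exp (- (3/800) * q ^ 3 * real k)"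
    using \<theta> lm by (simp add: exp_add[symmetric] algebra_simps)
  also have "\<dots> \<le> exp 2 / q\<^sup>2 * exp (- (3/800) * q ^ 3 * real k)"
    using q by (intro mult_right_mono) (auto simp: field_simps power_le_one)
  finally show ?thesis .
qed

section \<open>The submartingale\<close>

locale betting_model =
  fixes M :: "'a measure" and p x :: real and \<xi> :: "nat \<Rightarrow> 'a \<Rightarrow> real"
  assumes model: "bet_setup M p x \<xi>"
begin

sublocale prob_space M
  using model unfolding bet_setup_def by simp

lemma p_pos: "0 < p" and p_less_half: "p < 1/2"
  using model unfolding bet_setup_def by simp_all

lemma xi_measurable: "1 \<le> j \<Longrightarrow> \<xi> j \<in> borel_measurable M"
  using model unfolding bet_setup_def by simp

lemma xi_Suc_measurable [measurable]: "\<xi> (Suc n) \<in> borel_measurable M"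
  by (rule xi_measurable) simp

abbreviation F :: "nat \<Rightarrow> 'a measure" where
  "F \<equiv> nat_filt M \<xi>"

lemma subalgebra_F: "subalgebra M (F n)"
  by (rule subalgebra_nat_filt) (rule xi_measurable)

lemma measurable_from_F: "f \<in> borel_measurable (F n) \<Longrightarrow> f \<in> borel_measurable M"
  by (erule measurable_from_subalg[OF subalgebra_F])

lemma sigma_finite_subalgebra_F: "sigma_finite_subalgebra M (F n)"
  by (intro finite_measure_subalgebra_is_sigma_finite finite_measure_subalgebra.intro
      finite_measure_subalgebra_axioms.intro subalgebra_F) unfold_locales

lemma AE_xi_pm: "AE \<omega> in M. \<forall>j. \<xi> (Suc j) \<omega> \<in> {-1, 1}"
proof -
  have "AE \<omega> in M. \<xi> (Suc j) \<omega> \<in> {-1, 1}" for j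
  proof -
    have "prob {\<omega>\<in>space M. \<xi> (Suc j) \<omega> = 1} = p" "prob {\<omega>\<in>space M. \<xi> (Suc j) \<omega> = -1} = 1 - p"
      using model unfolding bet_setup_def by auto
    moreover have "prob {\<omega>\<in>space M. \<xi> (Suc j) \<omega> \<in> {-1, 1}}
        = prob {\<omega>\<in>space M. \<xi> (Suc j) \<omega> = 1} + prob {\<omega>\<in>space M. \<xi> (Suc j) \<omega> = -1}"
      by (subst finite_measure_Union[symmetric]) (auto intro!: arg_cong[where f = prob])
    ultimately show ?thesis by (subst prob_Collect_eq_1[symmetric]) simp_all
  qed
  then show ?thesis by (simp add: AE_all_countable)
qed

lemma indep_F_xi_Suc:
  "indep_set (sets (F n)) (sigma_sets (space M) {\<xi> (Suc n) -` A \<inter> space M | A. A \<in> sets borel})"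
proof -
  define E where "E i = {\<xi> i -` A \<inter> space M | A. A \<in> sets (borel :: real measure)}" for i
  define I where "I b = (if b then {1..n} else {Suc n})" for b
  have "indep_sets E {1..}"
    using model unfolding bet_setup_def indep_vars_def2 E_def by simp
  then have "indep_sets E (\<Union>b. I b)"
    by (rule indep_sets_mono_index[rotated]) (auto simp: I_def)
  moreover have "Int_stable (E i)" for i
    unfolding Int_stable_def E_def
  proof safe
    fix A B :: "real set" assume "A \<in> sets borel" "B \<in> sets borel"
    then show "\<exists>C. \<xi> i -` A \<inter> space M \<inter> (\<xi> i -` B \<inter> space M) = \<xi> i -` C \<inter> space M \<and> C \<in> sets borel"
      by (intro exI[of _ "A \<inter> B"]) auto
  qed
  moreover have "disjoint_family_on I UNIV"
    unfolding disjoint_family_on_def I_def by auto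
  ultimately have "indep_sets (\<lambda>b. sigma_sets (space M) (\<Union>i\<in>I b. E i)) UNIV"
    by (rule indep_sets_collect_sigma)
  moreover have "(\<Union>i\<in>I True. E i) = {\<xi> j -` A \<inter> space M | j A. j \<in> {1..n} \<and> A \<in> sets borel}"
  proof (intro equalityI subsetI)
    fix X assume "X \<in> (\<Union>i\<in>I True. E i)"
    then obtain j A where "j \<in> {1..n}" "A \<in> sets borel" "X = \<xi> j -` A \<inter> space M"
      unfolding I_def E_def by auto
    then show "X \<in> {\<xi> j -` A \<inter> space M | j A. j \<in> {1..n} \<and> A \<in> sets borel}" by blast
  next
    fix X assume "X \<in> {\<xi> j -` A \<inter> space M | j A. j \<in> {1..n} \<and> A \<in> sets borel}"
    then obtain j A where "j \<in> {1..n}" "A \<in> sets borel" "X = \<xi> j -` A \<inter> space M" by blast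
    then show "X \<in> (\<Union>i\<in>I True. E i)" unfolding I_def E_def by (intro UN_I[of j]) auto
  qed
  moreover have "(\<Union>i\<in>I False. E i) = {\<xi> (Suc n) -` A \<inter> space M | A. A \<in> sets borel}"
    unfolding I_def E_def by simp
  ultimately show ?thesis
    unfolding indep_set_def sets_nat_filt
    by (elim indep_sets_mono_sets) (simp split: bool.split)
qed

lemma indep_var_F_xi_Suc:
  assumes "u \<in> borel_measurable (F n)"
  shows "indep_var borel u borel (\<xi> (Suc n))"
  unfolding indep_var_eq
proof (intro conjI)
  show "random_variable borel u" using assms by (rule measurable_from_F)
  show "random_variable borel (\<xi> (Suc n))" by simp
  have "sigma_sets (space M) {u -` A \<inter> space M | A. A \<in> sets borel} \<subseteq> sets (F n)"
    using measurable_sets[OF assms] sets.top[of "F n"] by (intro sets.sigma_sets_subset') auto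
  then show "indep_set (sigma_sets (space M) {u -` A \<inter> space M | A. A \<in> sets borel})
      (sigma_sets (space M) {\<xi> (Suc n) -` A \<inter> space M | A. A \<in> sets borel})"
    using indep_F_xi_Suc[of n] unfolding indep_set_def
    by (elim indep_sets_mono_sets) (auto split: bool.split)
qed

lemma integral_if_xi_Suc:
  assumes u: "u \<in> borel_measurable (F n)" "integrable M u"
    and w: "w \<in> borel_measurable (F n)" "integrable M w"
  shows "(\<integral>\<omega>. (if \<xi> (Suc n) \<omega> = 1 then u \<omega> else w \<omega>) \<partial>M)
           = p * (\<integral>\<omega>. u \<omega> \<partial>M) + (1 - p) * (\<integral>\<omega>. w \<omega> \<partial>M)"
proof -
  define I :: "'a \<Rightarrow> real" where "I \<omega> = indicator {1} (\<xi> (Suc n) \<omega>)" for \<omega>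
  have [measurable]: "I \<in> borel_measurable M" unfolding I_def by measurable
  have int_I: "integrable M I"
    by (rule integrable_const_bound[where B = 1]) (auto simp: I_def)
  have "(\<integral>\<omega>. I \<omega> \<partial>M) = (\<integral>\<omega>. indicator {\<omega>\<in>space M. \<xi> (Suc n) \<omega> = 1} \<omega> \<partial>M)"
    by (intro Bochner_Integration.integral_cong) (auto simp: I_def split: split_indicator)
  also have "\<dots> = prob {\<omega>\<in>space M. \<xi> (Suc n) \<omega> = 1}"
    by simp
  finally have EI: "(\<integral>\<omega>. I \<omega> \<partial>M) = p"
    using model unfolding bet_setup_def by simp
  have EuI: "(\<integral>\<omega>. f \<omega> * I \<omega> \<partial>M) = (\<integral>\<omega>. f \<omega> \<partial>M) * p" and int_fI: "integrable M (\<lambda>\<omega>. f \<omega> * I \<omega>)"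
    if "f \<in> borel_measurable (F n)" "integrable M f" for f
  proof -
    have "indep_var borel (id \<circ> f) borel (indicator {1 :: real} \<circ> \<xi> (Suc n))"
      by (rule indep_var_compose[OF indep_var_F_xi_Suc[OF that(1)]]) auto
    then have indep: "indep_var borel f borel I" unfolding I_def comp_def id_def by simp
    show "(\<integral>\<omega>. f \<omega> * I \<omega> \<partial>M) = (\<integral>\<omega>. f \<omega> \<partial>M) * p"
      using indep_var_lebesgue_integral[OF indep that(2) int_I] EI by simp
    show "integrable M (\<lambda>\<omega>. f \<omega> * I \<omega>)"
      by (rule indep_var_integrable[OF indep that(2) int_I])
  qed
  have "(\<lambda>\<omega>. if \<xi> (Suc n) \<omega> = 1 then u \<omega> else w \<omega>) = (\<lambda>\<omega>. u \<omega> * I \<omega> + (w \<omega> - w \<omega> * I \<omega>))"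
    by (auto simp: I_def)
  then show ?thesis
    using EuI[OF u] EuI[OF w] int_fI[OF u] int_fI[OF w] u(2) w(2) by (simp add: algebra_simps)
qed

lemma cond_exp_if_xi_Suc:
  assumes u: "u \<in> borel_measurable (F n)" "integrable M u"
    and w: "w \<in> borel_measurable (F n)" "integrable M w"
  shows "AE \<omega> in M. real_cond_exp M (F n) (\<lambda>\<omega>. if \<xi> (Suc n) \<omega> = 1 then u \<omega> else w \<omega>) \<omega>
           = p * u \<omega> + (1 - p) * w \<omega>"
proof -
  interpret sigma_finite_subalgebra M "F n"
    by (rule sigma_finite_subalgebra_F)
  have [measurable]: "u \<in> borel_measurable M" "w \<in> borel_measurable M"
    using u(1) w(1) by (auto intro: measurable_from_F)
  show ?thesis
  proof (rule real_cond_exp_charact)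
    fix A assume A: "A \<in> sets (F n)"
    then have AM [measurable]: "A \<in> sets M" using subalg by (auto simp: subalgebra_def)
    have "indicator A \<in> borel_measurable (F n)" using A by simp
    then have meas: "(\<lambda>\<omega>. f \<omega> * indicator A \<omega>) \<in> borel_measurable (F n)"
      if "f \<in> borel_measurable (F n)" for f :: "'a \<Rightarrow> real"
      using that by measurable
    have "(\<integral>\<omega>\<in>A. (if \<xi> (Suc n) \<omega> = 1 then u \<omega> else w \<omega>) \<partial>M)
        = (\<integral>\<omega>. (if \<xi> (Suc n) \<omega> = 1 then u \<omega> * indicator A \<omega> else w \<omega> * indicator A \<omega>) \<partial>M)"
      unfolding set_lebesgue_integral_def by (intro Bochner_Integration.integral_cong) auto
    also have "\<dots> = p * (\<integral>\<omega>. u \<omega> * indicator A \<omega> \<partial>M) + (1 - p) * (\<integral>\<omega>. w \<omega> * indicator A \<omega> \<partial>M)"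
      using u w by (intro integral_if_xi_Suc meas integrable_real_mult_indicator[OF AM])
    also have "\<dots> = (\<integral>\<omega>. (p * u \<omega> + (1 - p) * w \<omega>) * indicator A \<omega> \<partial>M)"
      using integrable_real_mult_indicator[OF AM u(2)] integrable_real_mult_indicator[OF AM w(2)]
      by (simp add: algebra_simps)
    also have "\<dots> = (\<integral>\<omega>\<in>A. p * u \<omega> + (1 - p) * w \<omega> \<partial>M)"
      unfolding set_lebesgue_integral_def by (intro Bochner_Integration.integral_cong) auto
    finally show "(\<integral>\<omega>\<in>A. (if \<xi> (Suc n) \<omega> = 1 then u \<omega> else w \<omega>) \<partial>M)
        = (\<integral>\<omega>\<in>A. p * u \<omega> + (1 - p) * w \<omega> \<partial>M)" .
  next
    show "integrable M (\<lambda>\<omega>. if \<xi> (Suc n) \<omega> = 1 then u \<omega> else w \<omega>)"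
      by (rule Bochner_Integration.integrable_bound[OF
            Bochner_Integration.integrable_add[OF integrable_abs[OF u(2)] integrable_abs[OF w(2)]]])
        auto
    show "integrable M (\<lambda>\<omega>. p * u \<omega> + (1 - p) * w \<omega>)"
      using u w by simp
    show "(\<lambda>\<omega>. p * u \<omega> + (1 - p) * w \<omega>) \<in> borel_measurable (F n)"
      using u w by measurable
  qed
qed

lemma integrable_Mproc: "integrable M (\<lambda>\<omega>. Mproc p (\<lambda>i. \<xi> i \<omega>) x n)"
proof (rule integrable_const_bound)
  show "AE \<omega> in M. norm (Mproc p (\<lambda>i. \<xi> i \<omega>) x n) \<le> real n * (5 * ln 2 / 2)"
    using AE_xi_pm
  proof eventually_elim
    case (elim \<omega>)
    then show ?case using abs_Mproc_le[OF p_pos p_less_half elim] by simp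
  qed
  show "(\<lambda>\<omega>. Mproc p (\<lambda>i. \<xi> i \<omega>) x n) \<in> borel_measurable M"
    by (rule measurable_from_F) (rule Mproc_measurable_nat_filt)
qed

lemma Mproc_le_cond_exp:
  "AE \<omega> in M. Mproc p (\<lambda>i. \<xi> i \<omega>) x n
     \<le> real_cond_exp M (F n) (\<lambda>\<omega>. Mproc p (\<lambda>i. \<xi> i \<omega>) x (Suc n)) \<omega>"
proof -
  define Y where "Y \<omega> = Mproc p (\<lambda>i. \<xi> i \<omega>) x n" for \<omega>
  define X where "X \<omega> = Xproc (\<lambda>i. \<xi> i \<omega>) x n" for \<omega>
  define u where "u \<omega> = Y \<omega> + Mproc_incr p (X \<omega>) ((X \<omega> - 1) / 2)" for \<omega>
  define w where "w \<omega> = Y \<omega> + Mproc_incr p (X \<omega>) (2 * X \<omega>)" for \<omega>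
  have [measurable]: "Y \<in> borel_measurable (F n)" "X \<in> borel_measurable (F n)"
    unfolding Y_def X_def by (rule Mproc_measurable_nat_filt, rule Xproc_measurable_nat_filt) simp
  have meas: "u \<in> borel_measurable (F n)" "w \<in> borel_measurable (F n)"
    unfolding u_def w_def Mproc_incr_def by measurable
  then have [measurable]: "u \<in> borel_measurable M" "w \<in> borel_measurable M"
    by (auto intro: measurable_from_F)
  have [measurable]: "X \<in> borel_measurable M"
    by (rule measurable_from_F) measurable
  have "integrable M (\<lambda>\<omega>. Mproc_incr p (X \<omega>) ((X \<omega> - 1) / 2))"
    "integrable M (\<lambda>\<omega>. Mproc_incr p (X \<omega>) (2 * X \<omega>))"
    using abs_Mproc_incr_win_le[OF p_pos p_less_half] abs_Mproc_incr_loss_le[OF p_pos p_less_half]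
    by (auto intro!: integrable_const_bound[where B = "5 * ln 2 / 2"] simp: Mproc_incr_def)
  then have int: "integrable M u" "integrable M w"
    unfolding u_def w_def Y_def using integrable_Mproc[of n] by auto
  have drift: "Y \<omega> \<le> p * u \<omega> + (1 - p) * w \<omega>" for \<omega>
    using Mproc_incr_drift_nonneg[OF p_pos p_less_half, of "X \<omega>"]
    unfolding u_def w_def by (simp add: algebra_simps)
  have "AE \<omega> in M. Mproc p (\<lambda>i. \<xi> i \<omega>) x (Suc n) = (if \<xi> (Suc n) \<omega> = 1 then u \<omega> else w \<omega>)"
    using AE_xi_pm by eventually_elim (simp add: Mproc_Suc_pm u_def w_def Y_def X_def)
  then have "AE \<omega> in M. real_cond_exp M (F n) (\<lambda>\<omega>. Mproc p (\<lambda>i. \<xi> i \<omega>) x (Suc n)) \<omega>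
      = real_cond_exp M (F n) (\<lambda>\<omega>. if \<xi> (Suc n) \<omega> = 1 then u \<omega> else w \<omega>) \<omega>"
    using meas
    by (intro sigma_finite_subalgebra.real_cond_exp_cong[OF sigma_finite_subalgebra_F])
      (auto intro: measurable_from_F Mproc_measurable_nat_filt)
  moreover have "AE \<omega> in M. real_cond_exp M (F n) (\<lambda>\<omega>. if \<xi> (Suc n) \<omega> = 1 then u \<omega> else w \<omega>) \<omega>
      = p * u \<omega> + (1 - p) * w \<omega>"
    by (rule cond_exp_if_xi_Suc[OF meas(1) int(1) meas(2) int(2)])
  ultimately show ?thesis
    by eventually_elim (use drift[unfolded Y_def] in simp)
qed

theorem Mproc_submartingale: "submartingale M F (\<lambda>n \<omega>. Mproc p (\<lambda>i. \<xi> i \<omega>) x n)"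
  unfolding submartingale_def
  by (intro conjI allI subalgebra_F sets_nat_filt_mono integrable_Mproc Mproc_measurable_nat_filt
      Mproc_le_cond_exp) simp

lemma AE_Mproc_increment_le:
  "AE \<omega> in M. \<bar>Mproc p (\<lambda>i. \<xi> i \<omega>) x n - Mproc p (\<lambda>i. \<xi> i \<omega>) x (n - 1)\<bar> \<le> 5 * ln 2 / 2"
proof (cases n)
  case (Suc m)
  show ?thesis
    using AE_xi_pm
  proof eventually_elim
    case (elim \<omega>)
    then have "\<xi> (Suc m) \<omega> \<in> {-1, 1}" by blast
    then show ?case using Mproc_increment_bound[OF p_pos p_less_half] Suc by simp
  qed
qed simp

section \<open>The probability of many visits above R followed by ruin\<close>

definition gated_incr :: "(nat \<Rightarrow> 'a set) \<Rightarrow> real \<Rightarrow> real \<Rightarrow> nat \<Rightarrow> 'a \<Rightarrow> real" where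
  "gated_incr A a b j \<omega> = (if \<omega> \<in> A j then (if \<xi> (Suc j) \<omega> = 1 then a else b) else 0)"

lemma stopped_gated_Suc:
  "stopped_sum L (\<lambda>j. gated_incr A a b j \<omega>) (Suc n) =
     (if \<xi> (Suc n) \<omega> = 1
      then stopped_sum L (\<lambda>j. gated_incr A a b j \<omega>) n
             + (if stopped_sum L (\<lambda>j. gated_incr A a b j \<omega>) n < L \<and> \<omega> \<in> A n then a else 0)
      else stopped_sum L (\<lambda>j. gated_incr A a b j \<omega>) n
             + (if stopped_sum L (\<lambda>j. gated_incr A a b j \<omega>) n < L \<and> \<omega> \<in> A n then b else 0))"
  by (auto simp: gated_incr_def)

lemma stopped_gated_measurable:
  assumes A: "\<And>j. A j \<in> sets (F j)"
  shows "(\<lambda>\<omega>. stopped_sum L (\<lambda>j. gated_incr A a b j \<omega>) n) \<in> borel_measurable (F n)"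
proof (induction n)
  case (Suc n)
  have [measurable]: "(\<lambda>\<omega>. stopped_sum L (\<lambda>j. gated_incr A a b j \<omega>) n) \<in> borel_measurable (F (Suc n))"
    using measurable_nat_filt_mono[OF Suc] by simp
  have [measurable]: "\<xi> (Suc n) \<in> borel_measurable (F (Suc n))"
    by (rule xi_measurable_nat_filt) auto
  have [measurable]: "A n \<in> sets (F (Suc n))"
    using A sets_nat_filt_mono[of n "Suc n"] by auto
  show ?case unfolding stopped_gated_Suc by measurable
qed simp

lemma abs_stopped_gated_le:
  "\<bar>stopped_sum L (\<lambda>j. gated_incr A a b j \<omega>) n\<bar> \<le> real n * (\<bar>a\<bar> + \<bar>b\<bar>)"
proof -
  have "(\<Sum>j<n. \<bar>gated_incr A a b j \<omega>\<bar>) \<le> real n * (\<bar>a\<bar> + \<bar>b\<bar>)"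
    using sum_bounded_above[of "{..<n}" "\<lambda>j. \<bar>gated_incr A a b j \<omega>\<bar>" "\<bar>a\<bar> + \<bar>b\<bar>"]
    by (auto simp: gated_incr_def)
  then show ?thesis by (rule order_trans[OF abs_stopped_sum_le])
qed

lemma integral_exp_stopped_gated_le_1:
  assumes A: "\<And>j. A j \<in> sets (F j)" and ab: "p * exp a + (1 - p) * exp b \<le> 1"
  shows "(\<integral>\<omega>. exp (stopped_sum L (\<lambda>j. gated_incr A a b j \<omega>) n) \<partial>M) \<le> 1"
proof (induction n)
  case 0
  show ?case by (simp add: prob_space)
next
  case (Suc n)
  define W where "W \<omega> = stopped_sum L (\<lambda>j. gated_incr A a b j \<omega>) n" for \<omega>
  define u where "u \<omega> = exp (W \<omega> + (if W \<omega> < L \<and> \<omega> \<in> A n then a else 0))" for \<omega>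
  define w where "w \<omega> = exp (W \<omega> + (if W \<omega> < L \<and> \<omega> \<in> A n then b else 0))" for \<omega>
  define K where "K = exp (real n * (\<bar>a\<bar> + \<bar>b\<bar>) + (\<bar>a\<bar> + \<bar>b\<bar>))"
  have W_meas [measurable]: "W \<in> borel_measurable (F n)"
    unfolding W_def by (rule stopped_gated_measurable[OF A])
  have [measurable]: "A n \<in> sets (F n)" by (rule A)
  have meas: "u \<in> borel_measurable (F n)" "w \<in> borel_measurable (F n)"
    unfolding u_def w_def by measurable
  have W_bound: "\<bar>W \<omega>\<bar> \<le> real n * (\<bar>a\<bar> + \<bar>b\<bar>)" for \<omega>
    unfolding W_def by (rule abs_stopped_gated_le)
  have "\<bar>u \<omega>\<bar> \<le> K" "\<bar>w \<omega>\<bar> \<le> K" "\<bar>exp (W \<omega>)\<bar> \<le> K" for \<omega>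
    using W_bound[of \<omega>] unfolding u_def w_def K_def by (auto simp: abs_le_iff)
  moreover have [measurable]: "W \<in> borel_measurable M" "u \<in> borel_measurable M"
    "w \<in> borel_measurable M"
    using measurable_from_F[OF W_meas] measurable_from_F[OF meas(1)] measurable_from_F[OF meas(2)]
    by auto
  ultimately have int: "integrable M u" "integrable M w" "integrable M (\<lambda>\<omega>. exp (W \<omega>))"
    by (auto intro!: integrable_const_bound[where B = K])
  have "(\<integral>\<omega>. exp (stopped_sum L (\<lambda>j. gated_incr A a b j \<omega>) (Suc n)) \<partial>M)
      = (\<integral>\<omega>. (if \<xi> (Suc n) \<omega> = 1 then u \<omega> else w \<omega>) \<partial>M)"
    unfolding stopped_gated_Suc u_def w_def W_def by (simp add: if_distrib)
  also have "\<dots> = (\<integral>\<omega>. p * u \<omega> + (1 - p) * w \<omega> \<partial>M)"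
    using integral_if_xi_Suc[OF meas(1) int(1) meas(2) int(2)] int by simp
  also have "\<dots> \<le> (\<integral>\<omega>. exp (W \<omega>) \<partial>M)"
  proof (intro integral_mono)
    show "integrable M (\<lambda>\<omega>. p * u \<omega> + (1 - p) * w \<omega>)" using int by simp
    show "integrable M (\<lambda>\<omega>. exp (W \<omega>))" by (rule int(3))
    fix \<omega>
    have "p * exp (W \<omega> + a) + (1 - p) * exp (W \<omega> + b) = exp (W \<omega>) * (p * exp a + (1 - p) * exp b)"
      by (simp add: exp_add algebra_simps)
    also have "\<dots> \<le> exp (W \<omega>)"
      using ab by (simp add: mult_left_le)
    finally show "p * u \<omega> + (1 - p) * w \<omega> \<le> exp (W \<omega>)"
      unfolding u_def w_def by (auto simp: algebra_simps)
  qed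
  finally show ?case using Suc.IH unfolding W_def by linarith
qed

text \<open>Ville's inequality: stopping the partial sums at \<open>L\<close> makes the events \<open>H n\<close> increase,
  so Markov's inequality for each stopped sum bounds the probability of ever reaching \<open>L\<close>.\<close>
lemma prob_ever_ge_gated_sum_le:
  assumes A: "\<And>j. A j \<in> sets (F j)" and ab: "p * exp a + (1 - p) * exp b \<le> 1"
  shows "measure M {\<omega>\<in>space M. \<exists>n. L \<le> (\<Sum>j<n. gated_incr A a b j \<omega>)} \<le> exp (- L)"
proof -
  define H where "H n = {\<omega>\<in>space M. L \<le> stopped_sum L (\<lambda>j. gated_incr A a b j \<omega>) n}" for n
  have [measurable]: "(\<lambda>\<omega>. stopped_sum L (\<lambda>j. gated_incr A a b j \<omega>) n) \<in> borel_measurable M" for n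
    using stopped_gated_measurable[OF A] by (rule measurable_from_F)
  have H_sets: "H n \<in> sets M" for n
    unfolding H_def by measurable
  have "measure M (H n) \<le> exp (- L)" for n
  proof -
    have "H n = {\<omega>\<in>space M. exp L \<le> exp (stopped_sum L (\<lambda>j. gated_incr A a b j \<omega>) n)}"
      unfolding H_def by simp
    also have "measure M \<dots> \<le> (\<integral>\<omega>. exp (stopped_sum L (\<lambda>j. gated_incr A a b j \<omega>) n) \<partial>M) / exp L"
      using abs_stopped_gated_le[of L A a b _ n] unfolding abs_le_iff
      by (intro integral_Markov_inequality_measure[where A = "space M"]
          integrable_const_bound[where B = "exp (real n * (\<bar>a\<bar> + \<bar>b\<bar>))"]) (auto intro!: AE_I2)
    also have "\<dots> \<le> exp (- L)"
      using integral_exp_stopped_gated_le_1[OF A ab, of L n] by (simp add: exp_minus divide_right_mono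
          inverse_eq_divide)
    finally show ?thesis .
  qed
  moreover have "incseq H"
    by (rule incseq_SucI) (auto simp: H_def)
  ultimately have "measure M (\<Union>n. H n) \<le> exp (- L)"
    using H_sets by (intro LIMSEQ_le_const2[OF Lim_measure_incseq]) auto
  moreover have "measure M {\<omega>\<in>space M. \<exists>n. L \<le> (\<Sum>j<n. gated_incr A a b j \<omega>)}
      \<le> measure M (\<Union>n. H n)"
  proof (rule finite_measure_mono)
    show "{\<omega>\<in>space M. \<exists>n. L \<le> (\<Sum>j<n. gated_incr A a b j \<omega>)} \<subseteq> (\<Union>n. H n)"
      unfolding H_def using le_stopped_sum by blast
    show "(\<Union>n. H n) \<in> sets M"
      using H_sets by blast
  qed
  ultimately show ?thesis by linarith
qed

theorem prob_high_visits_then_ruin_le: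
  "measure M {\<omega>\<in>space M. real (Tcount p (\<lambda>i. \<xi> i \<omega>) x k) > 3 * real k / 4 \<and>
                        (\<exists>n\<ge>k. Xproc (\<lambda>i. \<xi> i \<omega>) x n \<le> 0)}
     \<le> exp 2 / (1 - 2 * p)\<^sup>2 * exp (- (3/800) * (1 - 2 * p) ^ 3 * real k)"
proof -
  define q where "q = 1 - 2 * p"
  define lm where "lm = - ln (1 - q\<^sup>2 / 200)"
  define R where "R = Rconst p"
  define L where "L = lm * (3 * real k / 4 - 1) - q / 20"
  define A where "A j = {\<omega>\<in>space M. R \<le> Xproc (\<lambda>i. \<xi> i \<omega>) x j}" for j
  define a where "a = lm + q / 20 * ln (2 * R / (R - 1))"
  define b where "b = lm - q / 20 * ln 2"
  have q: "0 < q" "q \<le> 1" using p_pos p_less_half unfolding q_def by auto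
  note lm = neg_ln_rate_bounds[OF q, folded lm_def]
  have lm0: "0 \<le> lm" using lm(1) zero_le_power2[of q] by linarith
  have R: "2 \<le> R" unfolding R_def by (rule Rconst_ge_2)
  have A: "A j \<in> sets (F j)" for j
  proof -
    have [measurable]: "(\<lambda>\<omega>. Xproc (\<lambda>i. \<xi> i \<omega>) x j) \<in> borel_measurable (F j)"
      by (rule Xproc_measurable_nat_filt) simp
    show ?thesis unfolding A_def using sets.top[of "F j"] by simp
  qed
  have [measurable]: "(\<lambda>\<omega>. gated_incr A a b j \<omega>) \<in> borel_measurable M" for j
  proof -
    have [measurable]: "A j \<in> sets M" using A subalgebra_F by (auto simp: subalgebra_def)
    show ?thesis unfolding gated_incr_def by measurable
  qed
  have "AE \<omega> in M. \<omega> \<in> {\<omega>\<in>space M. real (Tcount p (\<lambda>i. \<xi> i \<omega>) x k) > 3 * real k / 4 \<and>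
                        (\<exists>n\<ge>k. Xproc (\<lambda>i. \<xi> i \<omega>) x n \<le> 0)}
      \<longrightarrow> \<omega> \<in> {\<omega>\<in>space M. \<exists>n. L \<le> (\<Sum>j<n. gated_incr A a b j \<omega>)}"
    using AE_xi_pm
  proof eventually_elim
    case (elim \<omega>)
    show ?case
    proof
      assume "\<omega> \<in> {\<omega>\<in>space M. real (Tcount p (\<lambda>i. \<xi> i \<omega>) x k) > 3 * real k / 4 \<and>
                        (\<exists>n\<ge>k. Xproc (\<lambda>i. \<xi> i \<omega>) x n \<le> 0)}"
      then obtain n where \<omega>: "\<omega> \<in> space M" and ruin: "Xproc (\<lambda>i. \<xi> i \<omega>) x n \<le> 0"
        and T: "3 * real k / 4 < real (card {j \<in> {1..k}. R \<le> Xproc (\<lambda>i. \<xi> i \<omega>) x j})"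
        unfolding Tcount_def R_def by auto
      have "\<And>j. \<xi> (Suc j) \<omega> \<in> {-1, 1}" using elim by blast
      from high_visits_before_ruin_weight_ge[OF R this ruin T lm0, of "q / 20"] q \<omega>
      obtain \<sigma> where "L \<le> (\<Sum>j<\<sigma>. gated_incr A a b j \<omega>)"
        unfolding L_def gated_incr_def A_def a_def b_def by auto
      then show "\<omega> \<in> {\<omega>\<in>space M. \<exists>n. L \<le> (\<Sum>j<n. gated_incr A a b j \<omega>)}"
        using \<omega> by blast
    qed
  qed
  then have "measure M {\<omega>\<in>space M. real (Tcount p (\<lambda>i. \<xi> i \<omega>) x k) > 3 * real k / 4 \<and>
                        (\<exists>n\<ge>k. Xproc (\<lambda>i. \<xi> i \<omega>) x n \<le> 0)}
      \<le> measure M {\<omega>\<in>space M. \<exists>n. L \<le> (\<Sum>j<n. gated_incr A a b j \<omega>)}"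
    by (rule finite_measure_mono_AE) measurable
  also have "\<dots> \<le> exp (- L)"
    using exp_moment_le_1[OF p_pos p_less_half]
    unfolding a_def b_def lm_def q_def R_def by (intro prob_ever_ge_gated_sum_le A)
  also have "\<dots> \<le> exp 2 / q\<^sup>2 * exp (- (3/800) * q ^ 3 * real k)"
    unfolding L_def using q by (intro exp_neg_threshold_le lm) auto
  finally show ?thesis unfolding q_def .
qed

end

theorem lemma3p2:
  shows "(\<forall>(M :: 'a measure) p x \<xi>. bet_setup M p x \<xi> \<longrightarrow>
            submartingale M (nat_filt M \<xi>) (\<lambda>n \<omega>. Mproc p (\<lambda>i. \<xi> i \<omega>) x n) \<and>
            (\<forall>n\<ge>1. AE \<omega> in M.
               \<bar>Mproc p (\<lambda>i. \<xi> i \<omega>) x n - Mproc p (\<lambda>i. \<xi> i \<omega>) x (n - 1)\<bar> \<le> 5 * ln 2 / 2))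
       \<and> (\<exists>C>0. \<exists>\<beta>>0. \<forall>(M :: 'a measure) p x \<xi>. bet_setup M p x \<xi> \<longrightarrow>
            (\<forall>k\<ge>1. measure M {\<omega>\<in>space M.
                 real (Tcount p (\<lambda>i. \<xi> i \<omega>) x k) > 3 * real k / 4 \<and>
                 (\<exists>n\<ge>k. Xproc (\<lambda>i. \<xi> i \<omega>) x n \<le> 0)}
               \<le> C / (1 - 2 * p)^2 * exp (- \<beta> * (1 - 2 * p)^3 * real k)))"
proof (intro conjI allI impI)
  fix M :: "'a measure" and p x \<xi>
  assume "bet_setup M p x \<xi>"
  then interpret betting_model M p x \<xi> by unfold_locales
  show "submartingale M (nat_filt M \<xi>) (\<lambda>n \<omega>. Mproc p (\<lambda>i. \<xi> i \<omega>) x n)"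
    by (rule Mproc_submartingale)
  show "AE \<omega> in M. \<bar>Mproc p (\<lambda>i. \<xi> i \<omega>) x n - Mproc p (\<lambda>i. \<xi> i \<omega>) x (n - 1)\<bar>
          \<le> 5 * ln 2 / 2" for n
    by (rule AE_Mproc_increment_le)
next
  have "measure M {\<omega>\<in>space M. real (Tcount p (\<lambda>i. \<xi> i \<omega>) x k) > 3 * real k / 4 \<and>
           (\<exists>n\<ge>k. Xproc (\<lambda>i. \<xi> i \<omega>) x n \<le> 0)}
         \<le> exp 2 / (1 - 2 * p)^2 * exp (- (3/800) * (1 - 2 * p)^3 * real k)"
    if "bet_setup M p x \<xi>" for M :: "'a measure" and p x \<xi> k
    using that by (intro betting_model.prob_high_visits_then_ruin_le betting_model.intro)
  moreover have "(0::real) < 3/800" by simp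
  ultimately show "\<exists>C>0. \<exists>\<beta>>0. \<forall>(M :: 'a measure) p x \<xi>. bet_setup M p x \<xi> \<longrightarrow>
          (\<forall>k\<ge>1. measure M {\<omega>\<in>space M.
               real (Tcount p (\<lambda>i. \<xi> i \<omega>) x k) > 3 * real k / 4 \<and>
               (\<exists>n\<ge>k. Xproc (\<lambda>i. \<xi> i \<omega>) x n \<le> 0)}
             \<le> C / (1 - 2 * p)^2 * exp (- \<beta> * (1 - 2 * p)^3 * real k))"
    using exp_gt_zero[of 2] by blast
qed

end
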